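(* Let $X=\prod_{i=1}^n X_i$ be a finite set and $\langle\mathcal A,\mathcal U\rangle$ a linear twofold partition of $X$ (satisfying the standing assumptions). Then $\langle\mathcal A,\mathcal U\rangle$ has a representation in Model $F^{\underline u}$ if and only if $\mathcal A_*$ is a maximal antichain of the poset $(X,\succsim)$.
   Context: Setting. $N=\{1,\dots,n\}$, $n\ge2$. $(y_i,x_{-i})$ denotes $x$ with $i$-th coordinate replaced by $y_i$; $a_{-i}$ ranges over $\prod_{j\ne i}X_j$. A twofold partition $\langle\mathcal A,\mathcal U\rangle$ of $X$: disjoint sets with union $X$. Define $x_i\succsim_i y_i$ iff [for all $a_{-i}$, $(y_i,a_{-i})\in\mathcal A\Rightarrow(x_i,a_{-i})\in\mathcal A$]. Standing assumptions: every attribute is influential (exist $x_i,y_i,a_{-i}$ with $(x_i,a_{-i})\in\mathcal A$, $(y_i,a_{-i})\in\mathcal U$) and each $\succsim_i$ is antisymmetric. Linear: for all $i$, $x_i,y_i$, $a_{-i},b_{-i}$, if $(x_i,a_{-i})\in\mathcal A$ and $(y_i,b_{-i})\in\mathcal A$ then $(y_i,a_{-i})\in\mathcal A$ or $(x_i,b_{-i})\in\mathcal A$ (equivalently, each $\succsim_i$ is complete, hence a linear order here). $x\succsim y$ iff $x_i\succsim_i y_i$ for all $i$ (a partial order on $X$), with asymmetric part $\succ$. $\mathcal A_*$ is the set of minimal elements of $\mathcal A$ for $\succsim$. An antichain is a set of pairwise $\succsim$-incomparable elements; it is maximal if no element of $X$ can be added to it keeping it an antichain. Model $F^{u}$: there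 are semiorders $S_i$ on $X_i$ (reflexive, Ferrers: $xS_iy, zS_iw\Rightarrow xS_iw$ or $zS_iy$; semitransitive: $xS_iy, yS_iz\Rightarrow xS_iw$ or $wS_iz$), the relation $S$ on $X$ given by $xSy$ iff $x_iS_iy_i$ for all $i\in N$ with asymmetric part $P$, and a set $\mathcal P\subseteq X$ with no $p,q\in\mathcal P$ satisfying $pPq$, such that for all $x$: $x\in\mathcal U$ iff [$pPx$ for some $p\in\mathcal P$ and not $xPq$ for all $q\in\mathcal P$]. Model $F^{\underline u}$: Model $F^{u}$ with a representation in which $S_i=\succsim_i$ for all $i$ (so $S=\succsim$, $P=\succ$). *)

theory Defs
  imports Main "HOL-Library.FuncSet"
begin

text \<open>Attributes are indexed by N = {1..n}; the attribute sets are Xs i.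
  Alternatives are functions x :: nat => 'a in X = PiE {1..n} Xs.
  (y_i, a_{-i}) is written a(i := y) with a in X.\<close>

definition prodX :: "nat \<Rightarrow> (nat \<Rightarrow> 'a set) \<Rightarrow> (nat \<Rightarrow> 'a) set" where
  "prodX n Xs = PiE {1..n} Xs"

definition twofold_partition :: "nat \<Rightarrow> (nat \<Rightarrow> 'a set) \<Rightarrow> (nat \<Rightarrow> 'a) set \<Rightarrow> (nat \<Rightarrow> 'a) set \<Rightarrow> bool" where
  "twofold_partition n Xs A U \<longleftrightarrow> A \<inter> U = {} \<and> A \<union> U = prodX n Xs"

definition attr_ge :: "nat \<Rightarrow> (nat \<Rightarrow> 'a set) \<Rightarrow> (nat \<Rightarrow> 'a) set \<Rightarrow> nat \<Rightarrow> 'a \<Rightarrow> 'a \<Rightarrow> bool" where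
  "attr_ge n Xs A i x y \<longleftrightarrow> (\<forall>a\<in>prodX n Xs. a(i := y) \<in> A \<longrightarrow> a(i := x) \<in> A)"

definition influential :: "nat \<Rightarrow> (nat \<Rightarrow> 'a set) \<Rightarrow> (nat \<Rightarrow> 'a) set \<Rightarrow> (nat \<Rightarrow> 'a) set \<Rightarrow> nat \<Rightarrow> bool" where
  "influential n Xs A U i \<longleftrightarrow>
     (\<exists>x\<in>Xs i. \<exists>y\<in>Xs i. \<exists>a\<in>prodX n Xs. a(i := x) \<in> A \<and> a(i := y) \<in> U)"

definition standing_assumptions :: "nat \<Rightarrow> (nat \<Rightarrow> 'a set) \<Rightarrow> (nat \<Rightarrow> 'a) set \<Rightarrow> (nat \<Rightarrow> 'a) set \<Rightarrow> bool" where
  "standing_assumptions n Xs A U \<longleftrightarrow>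
     (\<forall>i\<in>{1..n}. influential n Xs A U i) \<and>
     (\<forall>i\<in>{1..n}. \<forall>x\<in>Xs i. \<forall>y\<in>Xs i.
        attr_ge n Xs A i x y \<and> attr_ge n Xs A i y x \<longrightarrow> x = y)"

definition linear_partition :: "nat \<Rightarrow> (nat \<Rightarrow> 'a set) \<Rightarrow> (nat \<Rightarrow> 'a) set \<Rightarrow> bool" where
  "linear_partition n Xs A \<longleftrightarrow>
     (\<forall>i\<in>{1..n}. \<forall>x\<in>Xs i. \<forall>y\<in>Xs i. \<forall>a\<in>prodX n Xs. \<forall>b\<in>prodX n Xs.
        a(i := x) \<in> A \<and> b(i := y) \<in> A \<longrightarrow> a(i := y) \<in> A \<or> b(i := x) \<in> A)"

definition dom_ge :: "nat \<Rightarrow> (nat \<Rightarrow> 'a set) \<Rightarrow> (nat \<Rightarrow> 'a) set \<Rightarrow> (nat \<Rightarrow> 'a) \<Rightarrow> (nat \<Rightarrow> 'a) \<Rightarrow> bool" where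
  "dom_ge n Xs A x y \<longleftrightarrow> (\<forall>i\<in>{1..n}. attr_ge n Xs A i (x i) (y i))"

definition dom_gt :: "nat \<Rightarrow> (nat \<Rightarrow> 'a set) \<Rightarrow> (nat \<Rightarrow> 'a) set \<Rightarrow> (nat \<Rightarrow> 'a) \<Rightarrow> (nat \<Rightarrow> 'a) \<Rightarrow> bool" where
  "dom_gt n Xs A x y \<longleftrightarrow> dom_ge n Xs A x y \<and> \<not> dom_ge n Xs A y x"

definition minimal_A :: "nat \<Rightarrow> (nat \<Rightarrow> 'a set) \<Rightarrow> (nat \<Rightarrow> 'a) set \<Rightarrow> (nat \<Rightarrow> 'a) set" where
  "minimal_A n Xs A = {x \<in> A. \<not> (\<exists>y\<in>A. dom_gt n Xs A x y)}"

definition antichain_in :: "(nat \<Rightarrow> 'a) set \<Rightarrow> ((nat \<Rightarrow> 'a) \<Rightarrow> (nat \<Rightarrow> 'a) \<Rightarrow> bool) \<Rightarrow> (nat \<Rightarrow> 'a) set \<Rightarrow> bool" where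
  "antichain_in X R S \<longleftrightarrow> S \<subseteq> X \<and> (\<forall>x\<in>S. \<forall>y\<in>S. x \<noteq> y \<longrightarrow> \<not> R x y \<and> \<not> R y x)"

definition maximal_antichain_in :: "(nat \<Rightarrow> 'a) set \<Rightarrow> ((nat \<Rightarrow> 'a) \<Rightarrow> (nat \<Rightarrow> 'a) \<Rightarrow> bool) \<Rightarrow> (nat \<Rightarrow> 'a) set \<Rightarrow> bool" where
  "maximal_antichain_in X R S \<longleftrightarrow> antichain_in X R S \<and>
     (\<forall>z\<in>X - S. \<not> antichain_in X R (insert z S))"

definition semiorder_on :: "'a set \<Rightarrow> ('a \<Rightarrow> 'a \<Rightarrow> bool) \<Rightarrow> bool" where
  "semiorder_on D R \<longleftrightarrow>
     (\<forall>x\<in>D. R x x) \<and>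
     (\<forall>x\<in>D. \<forall>y\<in>D. \<forall>z\<in>D. \<forall>w\<in>D. R x y \<and> R z w \<longrightarrow> R x w \<or> R z y) \<and>
     (\<forall>x\<in>D. \<forall>y\<in>D. \<forall>z\<in>D. \<forall>w\<in>D. R x y \<and> R y z \<longrightarrow> R x w \<or> R w z)"

definition Fu_rep :: "nat \<Rightarrow> (nat \<Rightarrow> 'a set) \<Rightarrow> (nat \<Rightarrow> 'a) set \<Rightarrow> (nat \<Rightarrow> 'a) set
     \<Rightarrow> (nat \<Rightarrow> 'a \<Rightarrow> 'a \<Rightarrow> bool) \<Rightarrow> (nat \<Rightarrow> 'a) set \<Rightarrow> bool" where
  "Fu_rep n Xs A U S P \<longleftrightarrow>
     (let X = prodX n Xs;
          SS = (\<lambda>x y. \<forall>i\<in>{1..n}. S i (x i) (y i));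
          PP = (\<lambda>x y. SS x y \<and> \<not> SS y x)
      in (\<forall>i\<in>{1..n}. semiorder_on (Xs i) (S i)) \<and>
         P \<subseteq> X \<and>
         (\<forall>p\<in>P. \<forall>q\<in>P. \<not> PP p q) \<and>
         (\<forall>x\<in>X. x \<in> U \<longleftrightarrow> (\<exists>p\<in>P. PP p x) \<and> (\<forall>q\<in>P. \<not> PP x q)))"

definition model_Fu_under :: "nat \<Rightarrow> (nat \<Rightarrow> 'a set) \<Rightarrow> (nat \<Rightarrow> 'a) set \<Rightarrow> (nat \<Rightarrow> 'a) set \<Rightarrow> bool" where
  "model_Fu_under n Xs A U \<longleftrightarrow> (\<exists>P. Fu_rep n Xs A U (\<lambda>i. attr_ge n Xs A i) P)"

end

theory Submission
  imports Defs
begin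

text \<open>The set A is closed upwards under dominance \<succeq>, and, X being finite, every element of A
  lies above an element of A_*. Consequently, with A_* as the set of profiles, the representation
  condition of Model F^u reduces to: every element of U lies strictly below some element of A_*.
  Conversely, the profiles of any representation are forced to lie in A_*, so a representation
  exists iff this condition holds. The same condition is equivalent to maximality of the antichain
  A_*: an element of A - A_* is always above some element of A_*, while an element of U can be
  comparable to an element of A_* only by lying strictly below it.\<close>

lemma attr_ge_refl: "attr_ge n Xs A i x x"
  unfolding attr_ge_def by blast

lemma attr_ge_trans: "attr_ge n Xs A i x y \<Longrightarrow> attr_ge n Xs A i y z \<Longrightarrow> attr_ge n Xs A i x z"
  unfolding attr_ge_def by blast

lemma attr_ge_total:
  assumes "linear_partition n Xs A" "i \<in> {1..n}" "x \<in> Xs i" "y \<in> Xs i"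
  shows "attr_ge n Xs A i x y \<or> attr_ge n Xs A i y x"
  using assms unfolding linear_partition_def attr_ge_def by blast

lemma semiorder_on_if_total_preorder:
  assumes trans: "\<And>x y z. R x y \<Longrightarrow> R y z \<Longrightarrow> R x z"
    and total: "\<And>x y. x \<in> D \<Longrightarrow> y \<in> D \<Longrightarrow> R x y \<or> R y x"
    and refl: "\<And>x. x \<in> D \<Longrightarrow> R x x"
  shows "semiorder_on D R"
  unfolding semiorder_on_def
proof (intro conjI ballI impI)
  fix x y z w assume "x \<in> D" "w \<in> D"
  then have "R x w \<or> R w x" using total by blast
  then show "R x w \<or> R z y" if "R x y \<and> R z w" using that trans by blast
  show "R x w \<or> R w z" if "R x y \<and> R y z" using \<open>R x w \<or> R w x\<close> that trans by blast
qed (use refl in blast)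

lemma dom_ge_refl: "dom_ge n Xs A x x"
  unfolding dom_ge_def attr_ge_def by blast

lemma dom_ge_trans: "dom_ge n Xs A x y \<Longrightarrow> dom_ge n Xs A y z \<Longrightarrow> dom_ge n Xs A x z"
  unfolding dom_ge_def using attr_ge_trans by metis

lemma dom_gt_ge_trans: "dom_gt n Xs A x y \<Longrightarrow> dom_ge n Xs A y z \<Longrightarrow> dom_gt n Xs A x z"
  unfolding dom_gt_def using dom_ge_trans by metis

text \<open>The coordinates of x are raised to those of y one at a time, each step staying in A by the
  definition of attr_ge.\<close>

lemma mem_if_dom_ge:
  assumes x: "x \<in> prodX n Xs" and y: "y \<in> prodX n Xs"
    and "x \<in> A" and ge: "dom_ge n Xs A y x"
  shows "y \<in> A"
proof -
  define z where "z k = (\<lambda>j. if j \<in> {1..k} then y j else x j)" for k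
  have z_X: "z k \<in> prodX n Xs" for k
    using x y unfolding z_def prodX_def by (force simp: PiE_def extensional_def)
  have "z k \<in> A" if "k \<le> n" for k
    using that
  proof (induction k)
    case 0
    then show ?case using \<open>x \<in> A\<close> by (simp add: z_def)
  next
    case (Suc k)
    have "attr_ge n Xs A (Suc k) (y (Suc k)) (x (Suc k))"
      using ge Suc.prems unfolding dom_ge_def by simp
    moreover have "(z k)(Suc k := x (Suc k)) = z k" "(z k)(Suc k := y (Suc k)) = z (Suc k)"
      unfolding z_def by auto
    ultimately show ?case
      using Suc z_X[of k] unfolding attr_ge_def by (metis Suc_leD)
  qed
  moreover have "z n = y"
    using x y unfolding z_def prodX_def by (auto simp: PiE_def extensional_def)
  ultimately show ?thesis by blast
qed

lemma maximal_antichain_in_iff: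
  assumes "antichain_in X R S"
  shows "maximal_antichain_in X R S \<longleftrightarrow> (\<forall>z\<in>X - S. \<exists>s\<in>S. R z s \<or> R s z)"
  using assms unfolding maximal_antichain_in_def antichain_in_def by (auto, metis DiffI)

lemma minimal_A_subset: "minimal_A n Xs A \<subseteq> A"
  unfolding minimal_A_def by blast

lemma minimal_A_not_gt: "m \<in> minimal_A n Xs A \<Longrightarrow> y \<in> A \<Longrightarrow> \<not> dom_gt n Xs A m y"
  unfolding minimal_A_def by blast

lemma Fu_rep_attr_ge_iff:
  "Fu_rep n Xs A U (attr_ge n Xs A) P \<longleftrightarrow>
     (\<forall>i\<in>{1..n}. semiorder_on (Xs i) (attr_ge n Xs A i)) \<and> P \<subseteq> prodX n Xs \<and>
     (\<forall>p\<in>P. \<forall>q\<in>P. \<not> dom_gt n Xs A p q) \<and>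
     (\<forall>x\<in>prodX n Xs. x \<in> U \<longleftrightarrow>
        (\<exists>p\<in>P. dom_gt n Xs A p x) \<and> (\<forall>q\<in>P. \<not> dom_gt n Xs A x q))"
  unfolding Fu_rep_def Let_def dom_gt_def dom_ge_def by (rule refl)

locale finite_twofold_partition =
  fixes n :: nat and Xs :: "nat \<Rightarrow> 'a set" and A U :: "(nat \<Rightarrow> 'a) set"
  assumes finite_X: "finite (prodX n Xs)"
    and partition: "twofold_partition n Xs A U"
    and attr_ge_antisym: "\<And>i x y. i \<in> {1..n} \<Longrightarrow> x \<in> Xs i \<Longrightarrow> y \<in> Xs i \<Longrightarrow>
      attr_ge n Xs A i x y \<Longrightarrow> attr_ge n Xs A i y x \<Longrightarrow> x = y"
begin

abbreviation X where "X \<equiv> prodX n Xs"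
abbreviation M where "M \<equiv> minimal_A n Xs A"
abbreviation ge (infix "\<succeq>" 50) where "x \<succeq> y \<equiv> dom_ge n Xs A x y"
abbreviation gt (infix "\<succ>" 50) where "x \<succ> y \<equiv> dom_gt n Xs A x y"

lemma A_subset_X: "A \<subseteq> X" and U_eq: "U = X - A"
  using partition unfolding twofold_partition_def by auto

lemma M_subset_X: "M \<subseteq> X"
  using minimal_A_subset A_subset_X by blast

lemma dom_ge_antisym:
  assumes "x \<in> X" "y \<in> X" "x \<succeq> y" "y \<succeq> x"
  shows "x = y"
proof
  fix j
  show "x j = y j"
  proof (cases "j \<in> {1..n}")
    case True
    then show ?thesis
      using assms attr_ge_antisym unfolding prodX_def dom_ge_def by blast
  next
    case False
    then show ?thesis using assms(1,2) unfolding prodX_def by (auto simp: PiE_def extensional_def)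
  qed
qed

lemma dom_gt_if_ge_neq: "x \<in> X \<Longrightarrow> y \<in> X \<Longrightarrow> x \<succeq> y \<Longrightarrow> x \<noteq> y \<Longrightarrow> x \<succ> y"
  using dom_ge_antisym unfolding dom_gt_def by blast

lemma ex_minimal_below:
  assumes "x \<in> A"
  shows "\<exists>m\<in>M. x \<succeq> m"
proof -
  have "finite A" using finite_X A_subset_X finite_subset by blast
  moreover have "asymp_on A (\<lambda>y z. z \<succ> y)" "transp_on A (\<lambda>y z. z \<succ> y)"
    unfolding asymp_on_def transp_on_def dom_gt_def using dom_ge_trans by blast+
  ultimately obtain m where "m \<in> A" "x \<succeq> m" and "\<forall>y\<in>A. m \<succ> y \<longrightarrow> \<not> x \<succeq> y"
    using Finite_Set.bex_min_element_with_property[of A "\<lambda>y z. z \<succ> y" "\<lambda>y. x \<succeq> y"]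
      \<open>x \<in> A\<close> dom_ge_refl by blast
  then have "m \<in> M"
    unfolding minimal_A_def using dom_ge_trans dom_gt_def by blast
  with \<open>x \<succeq> m\<close> show ?thesis by blast
qed

lemma antichain_M: "antichain_in X (\<succeq>) M"
proof -
  have "\<not> p \<succeq> q" if "p \<in> M" "q \<in> M" "p \<noteq> q" for p q
  proof -
    have "p \<in> X" "q \<in> X" "q \<in> A"
      using that M_subset_X minimal_A_subset by blast+
    then show ?thesis using that dom_gt_if_ge_neq minimal_A_not_gt by metis
  qed
  then show ?thesis unfolding antichain_in_def using M_subset_X by blast
qed

lemma U_not_above_M:
  assumes "u \<in> U" "m \<in> M"
  shows "\<not> u \<succeq> m"
proof
  assume "u \<succeq> m"
  moreover have "u \<in> X" "u \<notin> A" "m \<in> X" "m \<in> A"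
    using assms U_eq M_subset_X minimal_A_subset by blast+
  ultimately show False using mem_if_dom_ge by blast
qed

lemma maximal_antichain_M_iff: "maximal_antichain_in X (\<succeq>) M \<longleftrightarrow> (\<forall>u\<in>U. \<exists>m\<in>M. m \<succ> u)"
proof -
  have comparable_U: "(\<exists>m\<in>M. z \<succeq> m \<or> m \<succeq> z) \<longleftrightarrow> (\<exists>m\<in>M. m \<succ> z)" if "z \<in> U" for z
    using that U_not_above_M unfolding dom_gt_def by blast
  have comparable_A: "\<exists>m\<in>M. z \<succeq> m \<or> m \<succeq> z" if "z \<in> A - M" for z
    using that ex_minimal_below by blast
  have "X - M = (A - M) \<union> U"
    using U_eq A_subset_X minimal_A_subset by blast
  then show ?thesis
    unfolding maximal_antichain_in_iff[OF antichain_M] using comparable_U comparable_A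
    by (simp add: ball_Un)
qed

lemma Fu_rep_profiles_subset_M:
  assumes "Fu_rep n Xs A U (attr_ge n Xs A) P"
  shows "P \<subseteq> M"
proof -
  have P_X: "P \<subseteq> X" and P_antichain: "\<forall>p\<in>P. \<forall>q\<in>P. \<not> p \<succ> q"
    and U_iff: "\<forall>x\<in>X. x \<in> U \<longleftrightarrow> (\<exists>p\<in>P. p \<succ> x) \<and> (\<forall>q\<in>P. \<not> x \<succ> q)"
    using assms unfolding Fu_rep_attr_ge_iff by blast+
  have P_A: "P \<subseteq> A"
    using P_X P_antichain U_iff U_eq by blast
  have "p \<in> M" if p: "p \<in> P" for p
  proof -
    obtain m where m: "m \<in> M" "p \<succeq> m"
      using ex_minimal_below P_A p by blast
    have "p = m"
    proof (rule ccontr)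
      assume "p \<noteq> m"
      then have "p \<succ> m" using dom_gt_if_ge_neq P_X M_subset_X m p by blast
      moreover have "m \<notin> U" using m(1) minimal_A_subset U_eq by blast
      ultimately obtain q where "q \<in> P" "m \<succ> q"
        using U_iff m(1) M_subset_X p by blast
      moreover obtain m' where "m' \<in> M" "q \<succeq> m'"
        using ex_minimal_below P_A \<open>q \<in> P\<close> by blast
      ultimately have "m \<succ> m'" "m' \<in> A"
        using dom_gt_ge_trans minimal_A_subset by blast+
      then show False using m(1) minimal_A_not_gt by blast
    qed
    with m show ?thesis by blast
  qed
  then show ?thesis by blast
qed

lemma Fu_rep_M:
  assumes linear: "linear_partition n Xs A" and below: "\<forall>u\<in>U. \<exists>m\<in>M. m \<succ> u"
  shows "Fu_rep n Xs A U (attr_ge n Xs A) M"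
  unfolding Fu_rep_attr_ge_iff
proof (intro conjI ballI)
  show "semiorder_on (Xs i) (attr_ge n Xs A i)" if "i \<in> {1..n}" for i
    by (rule semiorder_on_if_total_preorder[OF attr_ge_trans attr_ge_total[OF linear that]
          attr_ge_refl])
  show "M \<subseteq> X" by (rule M_subset_X)
  show "\<not> p \<succ> q" if "p \<in> M" "q \<in> M" for p q
    using that minimal_A_subset minimal_A_not_gt by blast
  fix x assume x: "x \<in> X"
  show "x \<in> U \<longleftrightarrow> (\<exists>p\<in>M. p \<succ> x) \<and> (\<forall>q\<in>M. \<not> x \<succ> q)"
  proof
    assume "x \<in> U"
    then have "\<forall>q\<in>M. \<not> x \<succ> q" using U_not_above_M unfolding dom_gt_def by blast
    with below \<open>x \<in> U\<close> show "(\<exists>p\<in>M. p \<succ> x) \<and> (\<forall>q\<in>M. \<not> x \<succ> q)" by blast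
  next
    assume above: "(\<exists>p\<in>M. p \<succ> x) \<and> (\<forall>q\<in>M. \<not> x \<succ> q)"
    show "x \<in> U"
    proof (rule ccontr)
      assume "x \<notin> U"
      then have "x \<in> A" using U_eq x by blast
      then obtain m where m: "m \<in> M" "x \<succeq> m" using ex_minimal_below by blast
      have "m \<in> X" using m(1) M_subset_X by blast
      then have "x = m" using above m dom_gt_if_ge_neq x by blast
      with above \<open>x \<in> A\<close> show False using minimal_A_not_gt by blast
    qed
  qed
qed

lemma model_Fu_under_iff:
  assumes "linear_partition n Xs A"
  shows "model_Fu_under n Xs A U \<longleftrightarrow> (\<forall>u\<in>U. \<exists>m\<in>M. m \<succ> u)"
proof
  assume "model_Fu_under n Xs A U"
  then obtain P where rep: "Fu_rep n Xs A U (attr_ge n Xs A) P"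
    unfolding model_Fu_under_def by blast
  then have "\<forall>u\<in>U. \<exists>p\<in>P. p \<succ> u"
    unfolding Fu_rep_attr_ge_iff using U_eq by blast
  with Fu_rep_profiles_subset_M[OF rep] show "\<forall>u\<in>U. \<exists>m\<in>M. m \<succ> u" by blast
next
  assume "\<forall>u\<in>U. \<exists>m\<in>M. m \<succ> u"
  then show "model_Fu_under n Xs A U"
    unfolding model_Fu_under_def using Fu_rep_M[OF assms] by blast
qed

end

theorem theorem2:
  fixes n :: nat and Xs :: "nat \<Rightarrow> 'a set" and A U :: "(nat \<Rightarrow> 'a) set"
  assumes "n \<ge> 2"
    and "finite (prodX n Xs)"
    and "twofold_partition n Xs A U"
    and "standing_assumptions n Xs A U"
    and "linear_partition n Xs A"
  shows "model_Fu_under n Xs A U \<longleftrightarrow>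
           maximal_antichain_in (prodX n Xs) (dom_ge n Xs A) (minimal_A n Xs A)"
proof -
  interpret finite_twofold_partition n Xs A U
    using assms(2-4) unfolding finite_twofold_partition_def standing_assumptions_def by blast
  show ?thesis
    using model_Fu_under_iff[OF assms(5)] maximal_antichain_M_iff by simp
qed

end
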